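(* Let $n\ge 5$ and let $C_n$ be the cycle with $n$ vertices. Then $C_n$ is not a $2$-threshold graph: there are no real numbers $\theta_1<\theta_2$ and map $r:V(C_n)\to\mathbb{R}$ such that for all distinct vertices $u,v$, $uv$ is an edge if and only if $\theta_1\le r(u)+r(v)<\theta_2$.
   Context: All graphs are finite and simple. $C_n$ denotes the cycle with $n$ vertices. *)

theory Defs
  imports Complex_Main
begin

definition cycle_adj :: "nat \<Rightarrow> nat \<Rightarrow> nat \<Rightarrow> bool" where
  "cycle_adj n i j \<longleftrightarrow> i < n \<and> j < n \<and> i \<noteq> j \<and>
     (j = (i + 1) mod n \<or> i = (j + 1) mod n)"

definition two_threshold :: "'a set \<Rightarrow> ('a \<Rightarrow> 'a \<Rightarrow> bool) \<Rightarrow> bool" where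
  "two_threshold V E \<longleftrightarrow> (\<exists>(th1::real) th2 (r::'a \<Rightarrow> real). th1 < th2 \<and>
     (\<forall>u\<in>V. \<forall>v\<in>V. u \<noteq> v \<longrightarrow> (E u v \<longleftrightarrow> th1 \<le> r u + r v \<and> r u + r v < th2)))"

end

theory Submission
  imports Defs
begin

text \<open>Let \<open>e\<close> be a vertex of minimum weight and consider the path \<open>e-2, e-1, e, e+1, e+2\<close>.
  If \<open>r(e+1) \<le> r(e-1)\<close>, the weight sum of the chord \<open>{e-2, e+1}\<close> lies between the sums of
  the edges \<open>{e, e+1}\<close> and \<open>{e-2, e-1}\<close>, so the chord would have to be an edge; otherwise
  the chord \<open>{e-1, e+2}\<close> is squeezed in the same way. Both chords join vertices at
  distance 3 on the cycle, which are distinct and non-adjacent once \<open>n \<ge> 5\<close>.\<close>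

lemma path_chord_in_window:
  fixes x0 x1 x2 x3 x4 th1 th2 :: real
  assumes "th1 \<le> x0 + x1" "x0 + x1 < th2" "th1 \<le> x1 + x2" "x1 + x2 < th2"
    and "th1 \<le> x2 + x3" "x2 + x3 < th2" "th1 \<le> x3 + x4" "x3 + x4 < th2"
    and "x2 \<le> x0" "x2 \<le> x4"
  shows "(th1 \<le> x0 + x3 \<and> x0 + x3 < th2) \<or> (th1 \<le> x1 + x4 \<and> x1 + x4 < th2)"
  using assms by (cases "x3 \<le> x1") auto

lemma cycle_adj_Suc_mod:
  assumes "2 \<le> n" "i < n"
  shows "cycle_adj n i (Suc i mod n)"
  using assms by (cases "Suc i = n") (auto simp: cycle_adj_def)

lemma add_3_mod_neq:
  fixes n i :: nat
  assumes "5 \<le> n" "i < n"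
  shows "(i + 3) mod n \<noteq> i"
  using assms by (cases "i + 3 < n") (auto simp: mod_if)

lemma not_cycle_adj_add_3_mod:
  assumes "5 \<le> n" "i < n"
  shows "\<not> cycle_adj n i ((i + 3) mod n)"
  using assms by (cases "i + 3 < n") (auto simp: cycle_adj_def mod_if)

theorem mainTheorem3:
  fixes n :: nat
  assumes "n \<ge> 5"
  shows "\<not> two_threshold {0..<n} (cycle_adj n)"
proof
  assume "two_threshold {0..<n} (cycle_adj n)"
  then obtain th1 th2 :: real and r where window:
    "\<And>u v. u < n \<Longrightarrow> v < n \<Longrightarrow> u \<noteq> v \<Longrightarrow>
       cycle_adj n u v \<longleftrightarrow> th1 \<le> r u + r v \<and> r u + r v < th2"
    unfolding two_threshold_def by auto
  obtain e where "is_arg_min r (\<lambda>v. v \<in> {0..<n}) e"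
    using ex_is_arg_min_if_finite[of "{0..<n}" r] assms by auto
  then have "e < n" and e_min: "\<And>v. v < n \<Longrightarrow> r e \<le> r v"
    by (auto simp: is_arg_min_linorder)
  \<comment> \<open>\<open>w k\<close> is the vertex \<open>e - 2 + k\<close>; adding \<open>n\<close> avoids truncated subtraction.\<close>
  define w where "w k = (e + n - 2 + k) mod n" for k
  have w_lt: "w k < n" for k
    using assms by (simp add: w_def)
  have w_Suc: "w (Suc k) = Suc (w k) mod n" for k
    by (simp add: w_def mod_Suc_eq)
  have w_add_3: "w (k + 3) = (w k + 3) mod n" for k
    by (simp add: w_def mod_add_left_eq add.assoc)
  have "e + n - 2 + 2 = e + n"
    using assms by linarith
  then have "w 2 = e"
    using \<open>e < n\<close> by (simp add: w_def)
  have edge: "th1 \<le> r (w k) + r (w (Suc k)) \<and> r (w k) + r (w (Suc k)) < th2" for k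
    using window[of "w k" "w (Suc k)"] cycle_adj_Suc_mod[of n "w k"] assms w_lt
    by (auto simp: w_Suc cycle_adj_def)
  have chord: "\<not> (th1 \<le> r (w k) + r (w (k + 3)) \<and> r (w k) + r (w (k + 3)) < th2)" for k
    using window[of "w k" "w (k + 3)"] not_cycle_adj_add_3_mod[of n "w k"]
      add_3_mod_neq[of n "w k"] assms w_lt
    by (auto simp: w_add_3)
  show False
    using path_chord_in_window[of th1 "r (w 0)" "r (w 1)" th2 "r (w 2)" "r (w 3)" "r (w 4)"]
      edge[of 0] edge[of 1] edge[of 2] edge[of 3] chord[of 0] chord[of 1]
      e_min[OF w_lt, of 0] e_min[OF w_lt, of 4] \<open>w 2 = e\<close>
    by (simp add: numeral_eq_Suc)
qed

end
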